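(* Let $\mathcal V$ be a congruence modular variety, $\mathbb A\in\mathcal V$, $k\neq l\in\mathbb N$, and let $R\le\mathbb A^{2^{\{k,l\}}}$ be a $(2)$-dimensional tolerance of $\mathbb A$. If $\mathrm{face}_k^0(R)$ (viewed as a binary relation on $A$) is a congruence of $\mathbb A$ and $\mathrm{face}_k(R)$ is a congruence of the algebra $\mathrm{face}_k^0(R)$ (a subalgebra of $\mathbb A^2$), then $R$ is a $(2)$-dimensional congruence of $\mathbb A$.
   Context: Cube notation. $2=\{0,1\}$; for finite $S\subseteq\mathbb N$, $2^S$ is the set of functions $S\to 2$ and an $(S)$-cube over $A$ is $\gamma=(\gamma_f)_{f\in2^S}\in A^{2^S}$. For $i\in S$, $j\in 2$: $\mathrm{face}_i^j(\gamma)\in A^{2^{S\setminus\{i\}}}$ is $g\mapsto\gamma_{g\cup\{(i,j)\}}$; $\mathrm{glue}_{\{i\}}(\zeta,\eta)$ is the unique cube with $\mathrm{face}_i^0=\zeta$, $\mathrm{face}_i^1=\eta$; $\mathrm{refl}_i^j(\gamma)=\mathrm{glue}_{\{i\}}(\mathrm{face}_i^j\gamma,\mathrm{face}_i^j\gamma)$; $\mathrm{sym}_i(\gamma)=\mathrm{glue}_{\{i\}}(\mathrm{face}_i^1\gamma,\mathrm{face}_i^0\gamma)$. For $R\subseteq A^{2^S}$, $\mathrm{face}_i^j(R)=\{\mathrm{face}_i^j(\gamma):\gamma\in R\}$ and $\mathrm{face}_i(R)=\{(\mathrm{face}_i^0\gamma,\mathrm{face}_i^1\gamma):\gamma\in R\}$.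 A $(\{l\})$-cube $\zeta$ is identified with the pair $(\zeta_{\{(l,0)\}},\zeta_{\{(l,1)\}})$. With $|S|=n$: a subuniverse $R$ of $\mathbb A^{2^S}$ is an $(n)$-dimensional tolerance of $\mathbb A$ if $\mathrm{refl}_i^j(\gamma),\mathrm{sym}_i(\gamma)\in R$ for all $\gamma\in R$, $i\in S$, $j\in 2$; it is an $(n)$-dimensional congruence if moreover $\mathrm{face}_i(R)$ is a transitive relation for every $i\in S$. *)

theory Defs
  imports "HOL-Library.FuncSet"
begin

text \<open>Operations take argument lists; only lists of
  length arity f with entries in the carrier are meaningful.\<close>

record ('a, 'f) alg =
  carrier :: "'a set"
  ops :: "'f \<Rightarrow> 'a list \<Rightarrow> 'a"

definition is_alg :: "('f \<Rightarrow> nat) \<Rightarrow> ('a, 'f) alg \<Rightarrow> bool" where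
  "is_alg ar B \<longleftrightarrow> (\<forall>f xs. length xs = ar f \<and> set xs \<subseteq> carrier B \<longrightarrow> ops B f xs \<in> carrier B)"

definition subuniverse :: "('f \<Rightarrow> nat) \<Rightarrow> ('a, 'f) alg \<Rightarrow> 'a set \<Rightarrow> bool" where
  "subuniverse ar B X \<longleftrightarrow> X \<subseteq> carrier B \<and>
     (\<forall>f xs. length xs = ar f \<and> set xs \<subseteq> X \<longrightarrow> ops B f xs \<in> X)"

definition is_congruence :: "('f \<Rightarrow> nat) \<Rightarrow> ('a, 'f) alg \<Rightarrow> 'a rel \<Rightarrow> bool" where
  "is_congruence ar B \<theta> \<longleftrightarrow> equiv (carrier B) \<theta> \<and>
     (\<forall>f xs ys. length xs = ar f \<and> length ys = ar f \<and> list_all2 (\<lambda>x y. (x, y) \<in> \<theta>) xs ys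
        \<longrightarrow> (ops B f xs, ops B f ys) \<in> \<theta>)"

definition Con :: "('f \<Rightarrow> nat) \<Rightarrow> ('a, 'f) alg \<Rightarrow> 'a rel set" where
  "Con ar B = {\<theta>. is_congruence ar B \<theta>}"

definition con_join :: "('f \<Rightarrow> nat) \<Rightarrow> ('a, 'f) alg \<Rightarrow> 'a rel \<Rightarrow> 'a rel \<Rightarrow> 'a rel" where
  "con_join ar B \<alpha> \<beta> = \<Inter>{\<theta> \<in> Con ar B. \<alpha> \<union> \<beta> \<subseteq> \<theta>}"

definition con_modular :: "('f \<Rightarrow> nat) \<Rightarrow> ('a, 'f) alg \<Rightarrow> bool" where
  "con_modular ar B \<longleftrightarrow> (\<forall>\<alpha>\<in>Con ar B. \<forall>\<beta>\<in>Con ar B. \<forall>\<gamma>\<in>Con ar B.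
      \<alpha> \<subseteq> \<gamma> \<longrightarrow> con_join ar B \<alpha> (\<beta> \<inter> \<gamma>) = con_join ar B \<alpha> \<beta> \<inter> \<gamma>)"

datatype ('f, 'v) trm = Var 'v | App 'f "('f, 'v) trm list"

fun wf_trm :: "('f \<Rightarrow> nat) \<Rightarrow> ('f, 'v) trm \<Rightarrow> bool" where
  "wf_trm ar (Var x) = True"
| "wf_trm ar (App f ts) = (length ts = ar f \<and> (\<forall>t\<in>set ts. wf_trm ar t))"

fun eval :: "('a, 'f) alg \<Rightarrow> ('v \<Rightarrow> 'a) \<Rightarrow> ('f, 'v) trm \<Rightarrow> 'a" where
  "eval B \<sigma> (Var x) = \<sigma> x"
| "eval B \<sigma> (App f ts) = ops B f (map (eval B \<sigma>) ts)"

definition wf_identities :: "('f \<Rightarrow> nat) \<Rightarrow> (('f, nat) trm \<times> ('f, nat) trm) set \<Rightarrow> bool" where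
  "wf_identities ar \<Sigma> \<longleftrightarrow> (\<forall>(s, t)\<in>\<Sigma>. wf_trm ar s \<and> wf_trm ar t)"

definition models :: "('a, 'f) alg \<Rightarrow> (('f, nat) trm \<times> ('f, nat) trm) set \<Rightarrow> bool" where
  "models B \<Sigma> \<longleftrightarrow> (\<forall>(s, t)\<in>\<Sigma>. \<forall>\<sigma>. (\<forall>x. \<sigma> x \<in> carrier B) \<longrightarrow> eval B \<sigma> s = eval B \<sigma> t)"

definition in_variety :: "('f \<Rightarrow> nat) \<Rightarrow> (('f, nat) trm \<times> ('f, nat) trm) set \<Rightarrow> ('a, 'f) alg \<Rightarrow> bool" where
  "in_variety ar \<Sigma> B \<longleftrightarrow> is_alg ar B \<and> models B \<Sigma>"

text \<open>Congruence modularity of V = Mod(Sigma), as witnessed by the members of V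
  whose carrier lives in the type ((nat => 'a) => 'a) set. This type is large
  enough to contain (isomorphic copies of) all algebras in HSP of an algebra
  with universe in 'a of the size relevant here (e.g. finitely generated free
  algebras of the variety generated by such an algebra).\<close>

definition cm_variety :: "('f \<Rightarrow> nat) \<Rightarrow> (('f, nat) trm \<times> ('f, nat) trm) set \<Rightarrow> 'a itself \<Rightarrow> bool" where
  "cm_variety ar \<Sigma> _ \<longleftrightarrow> wf_identities ar \<Sigma> \<and>
     (\<forall>B :: (((nat \<Rightarrow> 'a) \<Rightarrow> 'a) set, 'f) alg. in_variety ar \<Sigma> B \<longrightarrow> con_modular ar B)"

text \<open>A function f : S -> 2 is represented by the subset of S on which it is 1.
  So 2^S corresponds to Pow S, and an (S)-cube over A is an element of
  Pow S ->E A (extensional functions).\<close>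

definition cubes :: "nat set \<Rightarrow> 'a set \<Rightarrow> (nat set \<Rightarrow> 'a) set" where
  "cubes S A = (Pow S \<rightarrow>\<^sub>E A)"

definition cube_alg :: "nat set \<Rightarrow> ('a, 'f) alg \<Rightarrow> (nat set \<Rightarrow> 'a, 'f) alg" where
  "cube_alg S B = \<lparr> carrier = cubes S (carrier B),
      ops = (\<lambda>f xs. \<lambda>v\<in>Pow S. ops B f (map (\<lambda>x. x v) xs)) \<rparr>"

text \<open>face_i^j (j = True means 1).\<close>

definition face :: "nat set \<Rightarrow> nat \<Rightarrow> bool \<Rightarrow> (nat set \<Rightarrow> 'a) \<Rightarrow> (nat set \<Rightarrow> 'a)" where
  "face S i j \<gamma> = (\<lambda>g\<in>Pow (S - {i}). \<gamma> (if j then insert i g else g))"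

definition glue :: "nat set \<Rightarrow> nat \<Rightarrow> (nat set \<Rightarrow> 'a) \<Rightarrow> (nat set \<Rightarrow> 'a) \<Rightarrow> (nat set \<Rightarrow> 'a)" where
  "glue S i \<zeta> \<eta> = (\<lambda>f\<in>Pow S. if i \<in> f then \<eta> (f - {i}) else \<zeta> f)"

definition refl_cube :: "nat set \<Rightarrow> nat \<Rightarrow> bool \<Rightarrow> (nat set \<Rightarrow> 'a) \<Rightarrow> (nat set \<Rightarrow> 'a)" where
  "refl_cube S i j \<gamma> = glue S i (face S i j \<gamma>) (face S i j \<gamma>)"

definition sym_cube :: "nat set \<Rightarrow> nat \<Rightarrow> (nat set \<Rightarrow> 'a) \<Rightarrow> (nat set \<Rightarrow> 'a)" where
  "sym_cube S i \<gamma> = glue S i (face S i True \<gamma>) (face S i False \<gamma>)"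

definition face_set :: "nat set \<Rightarrow> nat \<Rightarrow> bool \<Rightarrow> (nat set \<Rightarrow> 'a) set \<Rightarrow> (nat set \<Rightarrow> 'a) set" where
  "face_set S i j R = face S i j ` R"

definition face_rel :: "nat set \<Rightarrow> nat \<Rightarrow> (nat set \<Rightarrow> 'a) set \<Rightarrow> (nat set \<Rightarrow> 'a) rel" where
  "face_rel S i R = {(face S i False \<gamma>, face S i True \<gamma>) | \<gamma>. \<gamma> \<in> R}"

text \<open>n-dimensional tolerances and congruences (n = card S).\<close>

definition cube_tolerance :: "('f \<Rightarrow> nat) \<Rightarrow> ('a, 'f) alg \<Rightarrow> nat set \<Rightarrow> (nat set \<Rightarrow> 'a) set \<Rightarrow> bool" where
  "cube_tolerance ar B S R \<longleftrightarrow> subuniverse ar (cube_alg S B) R \<and>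
     (\<forall>\<gamma>\<in>R. \<forall>i\<in>S. (\<forall>j. refl_cube S i j \<gamma> \<in> R) \<and> sym_cube S i \<gamma> \<in> R)"

definition cube_congruence :: "('f \<Rightarrow> nat) \<Rightarrow> ('a, 'f) alg \<Rightarrow> nat set \<Rightarrow> (nat set \<Rightarrow> 'a) set \<Rightarrow> bool" where
  "cube_congruence ar B S R \<longleftrightarrow> cube_tolerance ar B S R \<and> (\<forall>i\<in>S. trans (face_rel S i R))"

definition as_pairs :: "nat \<Rightarrow> (nat set \<Rightarrow> 'a) set \<Rightarrow> 'a rel" where
  "as_pairs l Z = {(\<zeta> {}, \<zeta> {l}) | \<zeta>. \<zeta> \<in> Z}"

definition cube_subalg :: "nat set \<Rightarrow> ('a, 'f) alg \<Rightarrow> (nat set \<Rightarrow> 'a) set \<Rightarrow> (nat set \<Rightarrow> 'a, 'f) alg" where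
  "cube_subalg S B X = (cube_alg S B)\<lparr> carrier := X \<rparr>"

end

theory Submission
  imports Defs
begin

(* The l-edges (\<gamma> {}, \<gamma> {l}) of the squares \<gamma> \<in> R form a congruence \<theta> of A, and R, read as
   the relation between the two l-edges of each square, is a congruence \<rho> of the algebra
   \<theta> \<le> A\<^sup>2. Transitivity in direction l is then horizontal composition of squares:
   ((a, b), (c, d)), ((b, e), (d, f)) \<in> \<rho> imply ((a, e), (c, f)) \<in> \<rho>.
   This comes from Gumm's shifting lemma, a consequence of modularity, applied in the
   algebra of tuples lying in a single \<theta>-block to the congruences "equal i-th coordinates"
   and "\<rho>-related (i, j)-coordinates": a first application moves the left edge of a
   square inside its \<theta>-block, a second one composes two squares. *)

definition is_hom :: "('f \<Rightarrow> nat) \<Rightarrow> ('a, 'f) alg \<Rightarrow> ('b, 'f) alg \<Rightarrow> ('a \<Rightarrow> 'b) \<Rightarrow> bool" where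
  "is_hom ar B C h \<longleftrightarrow> h ` carrier B \<subseteq> carrier C \<and>
     (\<forall>f xs. length xs = ar f \<and> set xs \<subseteq> carrier B \<longrightarrow> h (ops B f xs) = ops C f (map h xs))"

definition pullback :: "('a \<Rightarrow> 'b) \<Rightarrow> 'a set \<Rightarrow> 'b rel \<Rightarrow> 'a rel" where
  "pullback h X \<rho> = {(x, y). x \<in> X \<and> y \<in> X \<and> (h x, h y) \<in> \<rho>}"

lemma list_all2_pullback:
  "list_all2 (\<lambda>x y. (x, y) \<in> pullback h X \<rho>) xs ys \<longleftrightarrow>
     set xs \<subseteq> X \<and> set ys \<subseteq> X \<and> list_all2 (\<lambda>x y. (x, y) \<in> \<rho>) (map h xs) (map h ys)"
  by (induction xs arbitrary: ys) (auto simp: pullback_def list_all2_Cons1)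

lemma is_congruence_pullback:
  assumes B: "is_alg ar B" and h: "is_hom ar B C h" and \<rho>: "is_congruence ar C \<rho>"
  shows "is_congruence ar B (pullback h (carrier B) \<rho>)"
  unfolding is_congruence_def
proof (intro conjI allI impI)
  have "equiv (carrier C) \<rho>" and "h ` carrier B \<subseteq> carrier C"
    using \<rho> h by (simp_all add: is_congruence_def is_hom_def)
  then show "equiv (carrier B) (pullback h (carrier B) \<rho>)"
    unfolding pullback_def equiv_def refl_on_def sym_def trans_def by blast
next
  fix f xs ys
  assume xs: "length xs = ar f \<and> length ys = ar f \<and> list_all2 (\<lambda>x y. (x, y) \<in> pullback h (carrier B) \<rho>) xs ys"
  then have "set xs \<subseteq> carrier B" "set ys \<subseteq> carrier B"
    and "(ops C f (map h xs), ops C f (map h ys)) \<in> \<rho>"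
    using \<rho> by (auto simp: list_all2_pullback is_congruence_def)
  with B h xs show "(ops B f xs, ops B f ys) \<in> pullback h (carrier B) \<rho>"
    by (simp add: pullback_def is_alg_def is_hom_def)
qed

lemma is_congruence_Id_on:
  assumes "is_alg ar B"
  shows "is_congruence ar B (Id_on (carrier B))"
proof (unfold is_congruence_def, intro conjI allI impI)
  show "equiv (carrier B) (Id_on (carrier B))"
    by (auto simp: equiv_def refl_on_def sym_def trans_def)
  fix f xs ys
  assume h: "length xs = ar f \<and> length ys = ar f \<and> list_all2 (\<lambda>x y. (x, y) \<in> Id_on (carrier B)) xs ys"
  have "xs = ys \<and> set xs \<subseteq> carrier B"
    using conjunct2[OF conjunct2[OF h]] by (induction rule: list_all2_induct) auto
  with h assms show "(ops B f xs, ops B f ys) \<in> Id_on (carrier B)"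
    unfolding is_alg_def by (metis Id_onI)
qed

lemma is_congruence_Int:
  assumes "is_congruence ar B \<alpha>" "is_congruence ar B \<beta>"
  shows "is_congruence ar B (\<alpha> \<inter> \<beta>)"
proof -
  have "(ops B f xs, ops B f ys) \<in> \<alpha> \<inter> \<beta>"
    if "length xs = ar f" "length ys = ar f" "list_all2 (\<lambda>x y. (x, y) \<in> \<alpha> \<inter> \<beta>) xs ys" for f xs ys
  proof -
    have "list_all2 (\<lambda>x y. (x, y) \<in> \<alpha>) xs ys" "list_all2 (\<lambda>x y. (x, y) \<in> \<beta>) xs ys"
      using that(3) by (auto elim: list_all2_mono)
    then show ?thesis using assms that(1,2) unfolding is_congruence_def by blast
  qed
  moreover have "equiv (carrier B) (\<alpha> \<inter> \<beta>)"
    using assms unfolding is_congruence_def equiv_def refl_on_def sym_def trans_def by blast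
  ultimately show ?thesis unfolding is_congruence_def by blast
qed

definition subpower_alg :: "('a, 'f) alg \<Rightarrow> ('i \<Rightarrow> 'a) set \<Rightarrow> ('i \<Rightarrow> 'a, 'f) alg" where
  "subpower_alg A X = \<lparr>carrier = X, ops = (\<lambda>f xs i. ops A f (map (\<lambda>x. x i) xs))\<rparr>"

lemma subpower_alg_simps [simp]:
  "carrier (subpower_alg A X) = X"
  "ops (subpower_alg A X) f xs = (\<lambda>i. ops A f (map (\<lambda>x. x i) xs))"
  by (simp_all add: subpower_alg_def)

lemma eval_subpower_alg:
  "eval (subpower_alg A X) \<sigma> t = (\<lambda>i. eval A (\<lambda>v. \<sigma> v i) t)"
  by (induction t) (auto simp: comp_def cong: map_cong)

lemma subpower_alg_in_variety:
  assumes A: "in_variety ar \<Sigma> A" and X: "is_alg ar (subpower_alg A X)"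
    and coords: "\<And>t i. t \<in> X \<Longrightarrow> t i \<in> carrier A"
  shows "in_variety ar \<Sigma> (subpower_alg A X)"
  using A X coords by (fastforce simp: in_variety_def models_def eval_subpower_alg)

definition image_alg :: "('a \<Rightarrow> 'b) \<Rightarrow> ('a, 'f) alg \<Rightarrow> ('b, 'f) alg" where
  "image_alg e B = \<lparr>carrier = e ` carrier B, ops = (\<lambda>f xs. e (ops B f (map (inv e) xs)))\<rparr>"

lemma image_alg_simps [simp]:
  "carrier (image_alg e B) = e ` carrier B"
  "ops (image_alg e B) f xs = e (ops B f (map (inv e) xs))"
  by (simp_all add: image_alg_def)

lemma eval_image_alg:
  assumes "inj e" "\<forall>x. \<sigma> x \<in> range e"
  shows "eval (image_alg e B) \<sigma> t = e (eval B (inv e \<circ> \<sigma>) t)"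
  using assms by (induction t) (auto simp: f_inv_into_f comp_def cong: map_cong)

lemma image_alg_in_variety:
  assumes e: "inj e" and B: "in_variety ar \<Sigma> B"
  shows "in_variety ar \<Sigma> (image_alg e B)"
proof -
  have "is_alg ar (image_alg e B)"
  proof (unfold is_alg_def, intro allI impI)
    fix f xs assume "length xs = ar f \<and> set xs \<subseteq> carrier (image_alg e B)"
    moreover from this have "set (map (inv e) xs) \<subseteq> carrier B"
      using e by (auto simp: inv_f_f)
    ultimately show "ops (image_alg e B) f xs \<in> carrier (image_alg e B)"
      using B by (simp add: in_variety_def is_alg_def)
  qed
  moreover have "eval (image_alg e B) \<sigma> s = eval (image_alg e B) \<sigma> t"
    if st: "(s, t) \<in> \<Sigma>" and \<sigma>: "\<forall>x. \<sigma> x \<in> carrier (image_alg e B)" for s t \<sigma>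
  proof -
    have "inv e (\<sigma> x) \<in> carrier B" for x
      using \<sigma> e by (metis image_alg_simps(1) image_iff inv_f_f)
    then have "\<forall>x. (inv e \<circ> \<sigma>) x \<in> carrier B" by simp
    with B st have "eval B (inv e \<circ> \<sigma>) s = eval B (inv e \<circ> \<sigma>) t"
      by (auto simp: in_variety_def models_def)
    moreover have "\<forall>x. \<sigma> x \<in> range e" using \<sigma> by auto
    ultimately show ?thesis
      by (simp add: eval_image_alg[OF e])
  qed
  ultimately show ?thesis by (auto simp: in_variety_def models_def)
qed

lemma inv_is_hom_image_alg:
  assumes "inj e"
  shows "is_hom ar (image_alg e B) B (inv e)"
  using assms by (auto simp: is_hom_def inv_f_f)

lemma con_join_chain:
  assumes "\<alpha> \<in> Con ar B" "\<beta> \<in> Con ar B" "(u, p) \<in> \<beta>" "(p, q) \<in> \<alpha>" "(q, v) \<in> \<beta>"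
  shows "(u, v) \<in> con_join ar B \<alpha> \<beta>"
proof (unfold con_join_def, rule InterI)
  fix \<theta> assume "\<theta> \<in> {\<theta> \<in> Con ar B. \<alpha> \<union> \<beta> \<subseteq> \<theta>}"
  then have "trans \<theta>" "\<alpha> \<union> \<beta> \<subseteq> \<theta>" by (auto simp: Con_def is_congruence_def equiv_def)
  with assms(3-5) show "(u, v) \<in> \<theta>" by (meson UnCI subsetD transE)
qed

lemma con_modular_shifting:
  assumes B: "con_modular ar B"
    and \<sigma>: "is_congruence ar B \<sigma>" and \<tau>: "is_congruence ar B \<tau>" and \<pi>: "is_congruence ar B \<pi>"
    and "\<sigma> \<subseteq> \<tau>" and "\<pi> \<inter> \<tau> \<subseteq> \<sigma>"
    and "(u, v) \<in> \<tau>" and "(u, p) \<in> \<pi>" "(p, q) \<in> \<sigma>" "(q, v) \<in> \<pi>"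
  shows "(u, v) \<in> \<sigma>"
proof -
  have Con: "\<sigma> \<in> Con ar B" "\<tau> \<in> Con ar B" "\<pi> \<in> Con ar B"
    using \<sigma> \<tau> \<pi> by (simp_all add: Con_def)
  have "(u, v) \<in> con_join ar B \<sigma> \<pi> \<inter> \<tau>"
    using con_join_chain[OF Con(1,3)] assms(7-10) by blast
  also have "\<dots> = con_join ar B \<sigma> (\<pi> \<inter> \<tau>)"
    using B Con \<open>\<sigma> \<subseteq> \<tau>\<close> by (simp add: con_modular_def)
  also have "\<dots> \<subseteq> \<sigma>"
    using Con(1) \<open>\<pi> \<inter> \<tau> \<subseteq> \<sigma>\<close> by (auto simp: con_join_def)
  finally show ?thesis .
qed

lemma is_congruence_field:
  "is_congruence ar B \<rho> \<Longrightarrow> (x, y) \<in> \<rho> \<Longrightarrow> x \<in> carrier B \<and> y \<in> carrier B"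
  unfolding is_congruence_def equiv_def refl_on_def by blast

(* cm_variety only constrains algebras whose carrier lies in ((nat \<Rightarrow> 'a) \<Rightarrow> 'a) set;
   subalgebras of A^\<nat> are moved there along this injection, which recovers t n by
   evaluating at any g that first differs from g 0 at index Suc n. *)
definition tuple_code :: "(nat \<Rightarrow> 'a) \<Rightarrow> ((nat \<Rightarrow> 'a) \<Rightarrow> 'a) set" where
  "tuple_code t = {\<lambda>g. t (LEAST i. g (Suc i) \<noteq> g 0)}"

lemma inj_tuple_code: "inj tuple_code"
proof (rule injI)
  fix t t' :: "nat \<Rightarrow> 'a" assume code: "tuple_code t = tuple_code t'"
  show "t = t'"
  proof (cases "\<exists>p q :: 'a. p \<noteq> q")
    case False
    then show ?thesis by blast
  next
    case True
    then obtain p q :: 'a where "p \<noteq> q" by blast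
    have index: "(LEAST i. (if i = n then q else p) \<noteq> p) = n" for n :: nat
      by (rule Least_equality) (use \<open>p \<noteq> q\<close> in \<open>auto split: if_splits\<close>)
    have codes: "(\<lambda>g :: nat \<Rightarrow> 'a. t (LEAST i. g (Suc i) \<noteq> g 0)) = (\<lambda>g. t' (LEAST i. g (Suc i) \<noteq> g 0))"
      using code by (simp add: tuple_code_def)
    have "t n = t' n" for n
      using fun_cong[OF codes, of "\<lambda>i. if i = Suc n then q else p"] by (simp add: index)
    then show ?thesis by blast
  qed
qed

lemma cm_variety_shifting:
  fixes B :: "(nat \<Rightarrow> 'a, 'f) alg"
  assumes V: "cm_variety ar \<Sigma> TYPE('a)" and B: "in_variety ar \<Sigma> B"
    and \<sigma>: "is_congruence ar B \<sigma>" and \<tau>: "is_congruence ar B \<tau>" and \<pi>: "is_congruence ar B \<pi>"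
    and "\<sigma> \<subseteq> \<tau>" and "\<pi> \<inter> \<tau> \<subseteq> \<sigma>"
    and "(u, v) \<in> \<tau>" and "(u, p) \<in> \<pi>" "(p, q) \<in> \<sigma>" "(q, v) \<in> \<pi>"
  shows "(u, v) \<in> \<sigma>"
proof -
  let ?C = "image_alg tuple_code B"
  let ?pb = "\<lambda>\<rho>. pullback (inv tuple_code) (carrier ?C) \<rho>"
  have C: "in_variety ar \<Sigma> ?C"
    by (rule image_alg_in_variety[OF inj_tuple_code B])
  have cong: "is_congruence ar ?C (?pb \<rho>)" if "is_congruence ar B \<rho>" for \<rho>
    using C inv_is_hom_image_alg[OF inj_tuple_code] that
    by (intro is_congruence_pullback) (simp_all add: in_variety_def)
  have code_iff: "(tuple_code x, tuple_code y) \<in> ?pb \<rho> \<longleftrightarrow> (x, y) \<in> \<rho>"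
    if "is_congruence ar B \<rho>" for x y \<rho>
    using is_congruence_field[OF that] by (auto simp: pullback_def inv_f_f[OF inj_tuple_code])
  have "(tuple_code u, tuple_code v) \<in> ?pb \<sigma>"
  proof (rule con_modular_shifting[OF _ cong[OF \<sigma>] cong[OF \<tau>] cong[OF \<pi>]])
    show "con_modular ar ?C"
      using V C by (simp add: cm_variety_def)
    show "?pb \<sigma> \<subseteq> ?pb \<tau>" "?pb \<pi> \<inter> ?pb \<tau> \<subseteq> ?pb \<sigma>"
      using assms(6,7) by (auto simp: pullback_def)
  qed (use assms(8-11) code_iff \<sigma> \<tau> \<pi> in blast)+
  then show ?thesis using code_iff[OF \<sigma>] by blast
qed

definition pair_alg :: "('a, 'f) alg \<Rightarrow> 'a rel \<Rightarrow> ('a \<times> 'a, 'f) alg" where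
  "pair_alg A \<theta> = \<lparr>carrier = \<theta>, ops = (\<lambda>f ps. (ops A f (map fst ps), ops A f (map snd ps)))\<rparr>"

lemma pair_alg_simps [simp]:
  "carrier (pair_alg A \<theta>) = \<theta>"
  "ops (pair_alg A \<theta>) f ps = (ops A f (map fst ps), ops A f (map snd ps))"
  by (simp_all add: pair_alg_def)

definition block_tuples :: "'a rel \<Rightarrow> (nat \<Rightarrow> 'a) set" where
  "block_tuples \<theta> = {t. \<forall>i j. (t i, t j) \<in> \<theta>}"

definition triple :: "'a \<Rightarrow> 'a \<Rightarrow> 'a \<Rightarrow> nat \<Rightarrow> 'a" where
  "triple a b c i = (if i = 0 then a else if i = 1 then b else c)"

lemma triple_in_block_tuples:
  assumes "equiv S \<theta>" "(a, b) \<in> \<theta>" "(b, c) \<in> \<theta>"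
  shows "triple a b c \<in> block_tuples \<theta>"
proof -
  have "(a, c) \<in> \<theta>" "(a, a) \<in> \<theta>" "(b, b) \<in> \<theta>" "(c, c) \<in> \<theta>" "(b, a) \<in> \<theta>" "(c, b) \<in> \<theta>" "(c, a) \<in> \<theta>"
    using assms unfolding equiv_def refl_on_def sym_def trans_def by blast+
  with assms show ?thesis by (simp add: block_tuples_def triple_def)
qed

locale congruence_of_congruence =
  fixes ar :: "'f \<Rightarrow> nat" and \<Sigma> :: "(('f, nat) trm \<times> ('f, nat) trm) set"
    and A :: "('a, 'f) alg" and \<theta> :: "'a rel" and \<rho> :: "('a \<times> 'a) rel"
  assumes variety: "cm_variety ar \<Sigma> TYPE('a)" and A: "in_variety ar \<Sigma> A"
    and \<theta>: "is_congruence ar A \<theta>" and \<rho>: "is_congruence ar (pair_alg A \<theta>) \<rho>"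
begin

lemma theta_equiv: "equiv (carrier A) \<theta>"
  using \<theta> by (simp add: is_congruence_def)

lemma rho_equiv: "equiv \<theta> \<rho>"
  using \<rho> by (simp add: is_congruence_def)

lemma block_tuples_carrier: "t \<in> block_tuples \<theta> \<Longrightarrow> t i \<in> carrier A"
  using is_congruence_field[OF \<theta>] by (auto simp: block_tuples_def)

lemma rho_field: "(p, q) \<in> \<rho> \<Longrightarrow> p \<in> \<theta> \<and> q \<in> \<theta>"
  using is_congruence_field[OF \<rho>] by simp

lemma block_subpower_in_variety: "in_variety ar \<Sigma> (subpower_alg A (block_tuples \<theta>))"
proof (rule subpower_alg_in_variety[OF A])
  show "t i \<in> carrier A" if "t \<in> block_tuples \<theta>" for t i
    using that by (rule block_tuples_carrier)
  have "(ops A f (map (\<lambda>x. x i) xs), ops A f (map (\<lambda>x. x j) xs)) \<in> \<theta>"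
    if "length xs = ar f" "set xs \<subseteq> block_tuples \<theta>" for f xs i j
  proof -
    have "list_all2 (\<lambda>x y. (x, y) \<in> \<theta>) (map (\<lambda>x. x i) xs) (map (\<lambda>x. x j) xs)"
      using that(2) by (auto simp: list_all2_conv_all_nth block_tuples_def dest!: nth_mem)
    with \<theta> that(1) show ?thesis by (simp add: is_congruence_def)
  qed
  then show "is_alg ar (subpower_alg A (block_tuples \<theta>))"
    unfolding is_alg_def subpower_alg_simps block_tuples_def[of \<theta>] by blast
qed

definition coord_eq :: "nat \<Rightarrow> (nat \<Rightarrow> 'a) rel" where
  "coord_eq i = pullback (\<lambda>t. t i) (block_tuples \<theta>) (Id_on (carrier A))"

definition coord_rho :: "nat \<Rightarrow> nat \<Rightarrow> (nat \<Rightarrow> 'a) rel" where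
  "coord_rho i j = pullback (\<lambda>t. (t i, t j)) (block_tuples \<theta>) \<rho>"

lemma block_subpower_is_alg: "is_alg ar (subpower_alg A (block_tuples \<theta>))"
  using block_subpower_in_variety by (simp add: in_variety_def)

lemma coord_eq_congruence: "is_congruence ar (subpower_alg A (block_tuples \<theta>)) (coord_eq i)"
proof -
  have "is_hom ar (subpower_alg A (block_tuples \<theta>)) A (\<lambda>t. t i)"
    using block_tuples_carrier by (auto simp: is_hom_def)
  moreover have "is_congruence ar A (Id_on (carrier A))"
    using A by (simp add: in_variety_def is_congruence_Id_on)
  ultimately show ?thesis
    using is_congruence_pullback[OF block_subpower_is_alg] by (simp add: coord_eq_def)
qed

lemma coord_rho_congruence: "is_congruence ar (subpower_alg A (block_tuples \<theta>)) (coord_rho i j)"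
proof -
  have "(\<lambda>t. (t i, t j)) ` block_tuples \<theta> \<subseteq> \<theta>"
    by (auto simp: block_tuples_def)
  then have "is_hom ar (subpower_alg A (block_tuples \<theta>)) (pair_alg A \<theta>) (\<lambda>t. (t i, t j))"
    by (simp add: is_hom_def comp_def)
  then show ?thesis
    using is_congruence_pullback[OF block_subpower_is_alg _ \<rho>] by (simp add: coord_rho_def)
qed

lemma rho_shift_left:
  assumes xy: "(x, y) \<in> \<theta>" and yz: "((y, z), (y, z')) \<in> \<rho>"
  shows "((x, z), (x, z')) \<in> \<rho>"
proof -
  have "(y, z) \<in> \<theta>" "(y, z') \<in> \<theta>" using rho_field[OF yz] by simp_all
  moreover have "(y, y) \<in> \<theta>"
    using xy theta_equiv unfolding equiv_def refl_on_def by blast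
  ultimately have block: "triple x y z \<in> block_tuples \<theta>" "triple x y z' \<in> block_tuples \<theta>"
    "triple y y z \<in> block_tuples \<theta>" "triple y y z' \<in> block_tuples \<theta>"
    using xy theta_equiv by (auto intro!: triple_in_block_tuples)
  have carrier: "x \<in> carrier A" "y \<in> carrier A" "z \<in> carrier A" "z' \<in> carrier A"
    using is_congruence_field[OF \<theta>] xy \<open>(y, z) \<in> \<theta>\<close> \<open>(y, z') \<in> \<theta>\<close> by blast+
  let ?\<tau> = "coord_eq 0 \<inter> coord_rho 1 2" and ?\<pi> = "coord_eq 1 \<inter> coord_eq 2"
  have "(triple x y z, triple x y z') \<in> ?\<tau> \<inter> coord_rho 0 2"
  proof (rule cm_variety_shifting[OF variety block_subpower_in_variety, where \<pi> = ?\<pi>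
        and p = "triple y y z" and q = "triple y y z'"])
    show "?\<pi> \<inter> ?\<tau> \<subseteq> ?\<tau> \<inter> coord_rho 0 2"
      using rho_equiv by (auto simp: coord_eq_def coord_rho_def pullback_def block_tuples_def equiv_def refl_on_def)
    show "(triple x y z, triple x y z') \<in> ?\<tau>" "(triple y y z, triple y y z') \<in> ?\<tau> \<inter> coord_rho 0 2"
      "(triple x y z, triple y y z) \<in> ?\<pi>" "(triple y y z', triple x y z') \<in> ?\<pi>"
      using block carrier yz by (simp_all add: coord_eq_def coord_rho_def pullback_def triple_def Id_on_iff)
  qed (auto intro!: is_congruence_Int coord_eq_congruence coord_rho_congruence)
  then show ?thesis by (simp add: coord_rho_def pullback_def triple_def)
qed

lemma rho_horizontal_comp:
  assumes ab: "((a, b), (c, d)) \<in> \<rho>" and be: "((b, e), (d, f)) \<in> \<rho>" and bd: "((b, b), (d, d)) \<in> \<rho>"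
  shows "((a, e), (c, f)) \<in> \<rho>"
proof -
  have block: "triple a b e \<in> block_tuples \<theta>" "triple c d f \<in> block_tuples \<theta>"
    "triple a b b \<in> block_tuples \<theta>" "triple c d d \<in> block_tuples \<theta>"
    using rho_field[OF ab] rho_field[OF be] rho_field[OF bd] theta_equiv
    by (auto intro!: triple_in_block_tuples)
  have carrier: "a \<in> carrier A" "b \<in> carrier A" "c \<in> carrier A" "d \<in> carrier A"
    using rho_field[OF ab] is_congruence_field[OF \<theta>] by blast+
  let ?\<tau> = "coord_rho 0 1 \<inter> coord_rho 1 2" and ?\<pi> = "coord_eq 0 \<inter> coord_eq 1"
  have "(triple a b e, triple c d f) \<in> ?\<tau> \<inter> coord_rho 0 2"
  proof (rule cm_variety_shifting[OF variety block_subpower_in_variety, where \<pi> = ?\<pi>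
        and p = "triple a b b" and q = "triple c d d"])
    show "?\<pi> \<inter> ?\<tau> \<subseteq> ?\<tau> \<inter> coord_rho 0 2"
    proof
      fix st assume st: "st \<in> ?\<pi> \<inter> ?\<tau>"
      then obtain s t where "st = (s, t)" "s \<in> block_tuples \<theta>" "t \<in> block_tuples \<theta>"
        "s 0 = t 0" "s 1 = t 1" "((s 1, s 2), (t 1, t 2)) \<in> \<rho>"
        by (auto simp: coord_eq_def coord_rho_def pullback_def)
      moreover from this have "((s 0, s 2), (t 0, t 2)) \<in> \<rho>"
        using rho_shift_left[of "s 0" "s 1" "s 2" "t 2"] by (simp add: block_tuples_def)
      ultimately show "st \<in> ?\<tau> \<inter> coord_rho 0 2"
        using st by (simp add: coord_rho_def pullback_def)
    qed
    show "(triple a b e, triple c d f) \<in> ?\<tau>" "(triple a b b, triple c d d) \<in> ?\<tau> \<inter> coord_rho 0 2"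
      "(triple a b e, triple a b b) \<in> ?\<pi>" "(triple c d d, triple c d f) \<in> ?\<pi>"
      using block carrier ab be bd by (simp_all add: coord_eq_def coord_rho_def pullback_def triple_def Id_on_iff)
  qed (auto intro!: is_congruence_Int coord_eq_congruence coord_rho_congruence)
  then show ?thesis by (simp add: coord_rho_def pullback_def triple_def)
qed

end

lemma pair_alg_is_alg:
  assumes \<theta>: "is_congruence ar A \<theta>"
  shows "is_alg ar (pair_alg A \<theta>)"
proof (unfold is_alg_def, intro allI impI)
  fix f ps assume ps: "length ps = ar f \<and> set ps \<subseteq> carrier (pair_alg A \<theta>)"
  then have "list_all2 (\<lambda>x y. (x, y) \<in> \<theta>) (map fst ps) (map snd ps)"
    unfolding list.rel_map list_all2_same by auto
  with \<theta> ps show "ops (pair_alg A \<theta>) f ps \<in> carrier (pair_alg A \<theta>)"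
    by (simp add: is_congruence_def)
qed

lemma face_extensional: "face S i j \<gamma> \<in> extensional (Pow (S - {i}))"
  by (simp add: face_def)

lemma face_square_apply:
  assumes "k \<noteq> l"
  shows "face {k, l} k False \<gamma> {} = \<gamma> {}" "face {k, l} k False \<gamma> {l} = \<gamma> {l}"
    "face {k, l} k True \<gamma> {} = \<gamma> {k}" "face {k, l} k True \<gamma> {l} = \<gamma> {k, l}"
    "face {k, l} l False \<gamma> {} = \<gamma> {}" "face {k, l} l False \<gamma> {k} = \<gamma> {k}"
    "face {k, l} l True \<gamma> {} = \<gamma> {l}" "face {k, l} l True \<gamma> {k} = \<gamma> {k, l}"
  using assms by (auto simp: face_def insert_commute)

lemma face_square_extensional:
  assumes "k \<noteq> l"
  shows "face {k, l} k j \<gamma> \<in> extensional (Pow {l})" "face {k, l} l j \<gamma> \<in> extensional (Pow {k})"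
proof -
  have "{k, l} - {k} = {l}" "{k, l} - {l} = {k}" using assms by auto
  then show "face {k, l} k j \<gamma> \<in> extensional (Pow {l})" "face {k, l} l j \<gamma> \<in> extensional (Pow {k})"
    using face_extensional by metis+
qed

lemma edge_eqI:
  assumes "\<zeta> \<in> extensional (Pow {x})" "\<eta> \<in> extensional (Pow {x})" "\<zeta> {} = \<eta> {}" "\<zeta> {x} = \<eta> {x}"
  shows "\<zeta> = \<eta>"
proof (rule extensionalityI[OF assms(1,2)])
  fix g assume "g \<in> Pow {x}"
  then have "g = {} \<or> g = {x}" by auto
  with assms(3,4) show "\<zeta> g = \<eta> g" by auto
qed

definition cube_of_pair :: "nat \<Rightarrow> 'a \<times> 'a \<Rightarrow> nat set \<Rightarrow> 'a" where
  "cube_of_pair l p = (\<lambda>g\<in>Pow {l}. if g = {} then fst p else snd p)"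

lemma cube_of_pair_apply [simp]: "cube_of_pair l p {} = fst p" "cube_of_pair l p {l} = snd p"
  by (auto simp: cube_of_pair_def)

lemma cube_of_pair_extensional: "cube_of_pair l p \<in> extensional (Pow {l})"
  by (simp add: cube_of_pair_def)

lemma cube_of_pair_eq: "\<zeta> \<in> extensional (Pow {l}) \<Longrightarrow> cube_of_pair l (\<zeta> {}, \<zeta> {l}) = \<zeta>"
  by (rule edge_eqI[OF cube_of_pair_extensional]) simp_all

lemma cube_of_pair_is_hom:
  assumes Z: "Z \<subseteq> extensional (Pow {l})"
  shows "is_hom ar (pair_alg A (as_pairs l Z)) (cube_subalg {l} A Z) (cube_of_pair l)"
proof -
  have "cube_of_pair l (\<zeta> {}, \<zeta> {l}) \<in> Z" if "\<zeta> \<in> Z" for \<zeta>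
    using that Z cube_of_pair_eq[of \<zeta> l] by auto
  then have "cube_of_pair l ` as_pairs l Z \<subseteq> Z"
    by (auto simp: as_pairs_def)
  moreover have "cube_of_pair l (ops A f (map fst ps), ops A f (map snd ps))
      = (\<lambda>v\<in>Pow {l}. ops A f (map (\<lambda>x. x v) (map (cube_of_pair l) ps)))" for f ps
    by (rule edge_eqI[OF cube_of_pair_extensional]) (simp_all add: comp_def)
  ultimately show ?thesis
    by (simp add: is_hom_def cube_subalg_def cube_alg_def)
qed

definition square_rel :: "nat \<Rightarrow> nat \<Rightarrow> (nat set \<Rightarrow> 'a) set \<Rightarrow> ('a \<times> 'a) rel" where
  "square_rel k l R = {((\<gamma> {}, \<gamma> {l}), (\<gamma> {k}, \<gamma> {k, l})) | \<gamma>. \<gamma> \<in> R}"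

lemma square_rel_eq_pullback:
  assumes kl: "k \<noteq> l" and sym: "\<And>\<gamma>. \<gamma> \<in> R \<Longrightarrow> sym_cube {k, l} k \<gamma> \<in> R"
  shows "square_rel k l R
    = pullback (cube_of_pair l) (as_pairs l (face_set {k, l} k False R)) (face_rel {k, l} k R)"
proof (intro equalityI subsetI)
  fix x assume "x \<in> square_rel k l R"
  then obtain \<gamma> where \<gamma>: "\<gamma> \<in> R" and x: "x = ((\<gamma> {}, \<gamma> {l}), (\<gamma> {k}, \<gamma> {k, l}))"
    by (auto simp: square_rel_def)
  have faces: "cube_of_pair l (\<gamma> {}, \<gamma> {l}) = face {k, l} k False \<gamma>"
    "cube_of_pair l (\<gamma> {k}, \<gamma> {k, l}) = face {k, l} k True \<gamma>"
    using cube_of_pair_eq[OF face_square_extensional(1)[OF kl]] by (metis face_square_apply[OF kl])+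
  (* symmetry in direction k puts the top edge of \<gamma> into the carrier as well *)
  have "face {k, l} k False (sym_cube {k, l} k \<gamma>) = face {k, l} k True \<gamma>"
    using kl by (intro ext) (auto simp: face_def sym_cube_def glue_def)
  then have "face {k, l} k j \<gamma> \<in> face_set {k, l} k False R" for j
    using \<gamma> sym[OF \<gamma>] unfolding face_set_def by (cases j) (auto intro: rev_image_eqI)
  then have "(face {k, l} k j \<gamma> {}, face {k, l} k j \<gamma> {l}) \<in> as_pairs l (face_set {k, l} k False R)" for j
    unfolding as_pairs_def by blast
  from this[of False] this[of True]
  have "(\<gamma> {}, \<gamma> {l}) \<in> as_pairs l (face_set {k, l} k False R)"
    "(\<gamma> {k}, \<gamma> {k, l}) \<in> as_pairs l (face_set {k, l} k False R)"
    by (simp_all add: face_square_apply[OF kl])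
  moreover have "(cube_of_pair l (\<gamma> {}, \<gamma> {l}), cube_of_pair l (\<gamma> {k}, \<gamma> {k, l})) \<in> face_rel {k, l} k R"
    using \<gamma> by (auto simp: faces face_rel_def)
  ultimately show "x \<in> pullback (cube_of_pair l) (as_pairs l (face_set {k, l} k False R)) (face_rel {k, l} k R)"
    by (simp add: x pullback_def)
next
  fix x assume "x \<in> pullback (cube_of_pair l) (as_pairs l (face_set {k, l} k False R)) (face_rel {k, l} k R)"
  then obtain a b c d \<gamma> where x: "x = ((a, b), (c, d))" and \<gamma>: "\<gamma> \<in> R"
    and "cube_of_pair l (a, b) = face {k, l} k False \<gamma>" "cube_of_pair l (c, d) = face {k, l} k True \<gamma>"
    by (auto simp: pullback_def face_rel_def)
  then have "a = \<gamma> {}" "b = \<gamma> {l}" "c = \<gamma> {k}" "d = \<gamma> {k, l}"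
    by (metis cube_of_pair_apply face_square_apply[OF kl] fst_conv snd_conv)+
  with \<gamma> show "x \<in> square_rel k l R" by (auto simp: x square_rel_def)
qed

lemma square_rel_refl_edge:
  assumes kl: "k \<noteq> l" and refl: "\<And>\<gamma>. \<gamma> \<in> R \<Longrightarrow> refl_cube {k, l} l False \<gamma> \<in> R"
    and sq: "((a, b), (c, d)) \<in> square_rel k l R"
  shows "((a, a), (c, c)) \<in> square_rel k l R"
proof -
  obtain \<gamma> where \<gamma>: "\<gamma> \<in> R" "a = \<gamma> {}" "b = \<gamma> {l}" "c = \<gamma> {k}" "d = \<gamma> {k, l}"
    using sq by (auto simp: square_rel_def)
  let ?\<delta> = "refl_cube {k, l} l False \<gamma>"
  have "{k, l} - {l} = {k}" using kl by auto
  then have "?\<delta> {} = a" "?\<delta> {l} = a" "?\<delta> {k} = c" "?\<delta> {k, l} = c"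
    using kl \<gamma> by (auto simp: refl_cube_def glue_def face_def insert_commute)
  moreover have "((?\<delta> {}, ?\<delta> {l}), (?\<delta> {k}, ?\<delta> {k, l})) \<in> square_rel k l R"
    using refl[OF \<gamma>(1)] unfolding square_rel_def by blast
  ultimately show ?thesis by simp
qed

lemma trans_face_rel_from_square_comp:
  assumes kl: "k \<noteq> l"
    and comp: "\<And>a b c d e f. ((a, b), (c, d)) \<in> square_rel k l R \<Longrightarrow> ((b, e), (d, f)) \<in> square_rel k l R
                 \<Longrightarrow> ((a, e), (c, f)) \<in> square_rel k l R"
  shows "trans (face_rel {k, l} l R)"
proof (rule transI)
  fix x y z assume "(x, y) \<in> face_rel {k, l} l R" "(y, z) \<in> face_rel {k, l} l R"
  then obtain \<gamma>\<^sub>1 \<gamma>\<^sub>2 where \<gamma>: "\<gamma>\<^sub>1 \<in> R" "\<gamma>\<^sub>2 \<in> R"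
    and x: "x = face {k, l} l False \<gamma>\<^sub>1" and z: "z = face {k, l} l True \<gamma>\<^sub>2"
    and y: "face {k, l} l True \<gamma>\<^sub>1 = face {k, l} l False \<gamma>\<^sub>2"
    by (auto simp: face_rel_def)
  have "\<gamma>\<^sub>1 {l} = \<gamma>\<^sub>2 {}" "\<gamma>\<^sub>1 {k, l} = \<gamma>\<^sub>2 {k}"
    using fun_cong[OF y, of "{}"] fun_cong[OF y, of "{k}"] by (simp_all add: face_square_apply[OF kl])
  with \<gamma> have "((\<gamma>\<^sub>1 {}, \<gamma>\<^sub>1 {l}), (\<gamma>\<^sub>1 {k}, \<gamma>\<^sub>1 {k, l})) \<in> square_rel k l R"
    "((\<gamma>\<^sub>1 {l}, \<gamma>\<^sub>2 {l}), (\<gamma>\<^sub>1 {k, l}, \<gamma>\<^sub>2 {k, l})) \<in> square_rel k l R"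
    by (auto simp: square_rel_def)
  from comp[OF this] obtain \<gamma>\<^sub>3 where "\<gamma>\<^sub>3 \<in> R"
    and \<gamma>\<^sub>3: "\<gamma>\<^sub>3 {} = \<gamma>\<^sub>1 {}" "\<gamma>\<^sub>3 {l} = \<gamma>\<^sub>2 {l}" "\<gamma>\<^sub>3 {k} = \<gamma>\<^sub>1 {k}" "\<gamma>\<^sub>3 {k, l} = \<gamma>\<^sub>2 {k, l}"
    by (auto simp: square_rel_def)
  have "face {k, l} l False \<gamma>\<^sub>3 = x" "face {k, l} l True \<gamma>\<^sub>3 = z"
    unfolding x z using \<gamma>\<^sub>3
    by (auto intro!: edge_eqI face_square_extensional kl simp: face_square_apply[OF kl])
  with \<open>\<gamma>\<^sub>3 \<in> R\<close> show "(x, z) \<in> face_rel {k, l} l R"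
    unfolding face_rel_def by blast
qed

theorem lemma2p8:
  fixes ar :: "'f \<Rightarrow> nat"
    and \<Sigma> :: "(('f, nat) trm \<times> ('f, nat) trm) set"
    and A :: "('a, 'f) alg"
    and k l :: nat
    and R :: "(nat set \<Rightarrow> 'a) set"
  assumes CM: "cm_variety ar \<Sigma> TYPE('a)"
    and A_in: "in_variety ar \<Sigma> A"
    and kl: "k \<noteq> l"
    and tol: "cube_tolerance ar A {k, l} R"
    and h1: "is_congruence ar A (as_pairs l (face_set {k, l} k False R))"
    and h2: "is_congruence ar (cube_subalg {l} A (face_set {k, l} k False R))
               (face_rel {k, l} k R)"
  shows "cube_congruence ar A {k, l} R"
proof -
  let ?Z = "face_set {k, l} k False R"
  have sym_k: "sym_cube {k, l} k \<gamma> \<in> R" and refl_l: "refl_cube {k, l} l False \<gamma> \<in> R"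
    if "\<gamma> \<in> R" for \<gamma>
    using tol that by (simp_all add: cube_tolerance_def)
  have "?Z \<subseteq> extensional (Pow {l})"
    using face_square_extensional(1)[OF kl] by (auto simp: face_set_def)
  then have "is_congruence ar (pair_alg A (as_pairs l ?Z)) (square_rel k l R)"
    using is_congruence_pullback[OF pair_alg_is_alg[OF h1] cube_of_pair_is_hom h2]
    by (simp add: square_rel_eq_pullback[OF kl sym_k])
  then interpret congruence_of_congruence ar \<Sigma> A "as_pairs l ?Z" "square_rel k l R"
    using CM A_in h1 by unfold_locales
  have "trans (face_rel {k, l} l R)"
  proof (rule trans_face_rel_from_square_comp[OF kl])
    fix a b c d e f
    assume "((a, b), (c, d)) \<in> square_rel k l R" "((b, e), (d, f)) \<in> square_rel k l R"
    then show "((a, e), (c, f)) \<in> square_rel k l R"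
      using rho_horizontal_comp square_rel_refl_edge[OF kl refl_l] by blast
  qed
  moreover have "trans (face_rel {k, l} k R)"
    using h2 by (simp add: is_congruence_def equiv_def)
  ultimately show ?thesis
    using tol by (auto simp: cube_congruence_def)
qed

end
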